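(* Let $d,k\in\mathbb{N}$ with $k\ge2$ and $d>2k$, and put $n=d-2k$. Let $\phi=\alpha\phi_1+\beta\phi_2$ with $\alpha,\beta>0$. Then every $\mathbf{z}\in\Lambda_1$ with $\phi[\mathbf{z}]=\min\{\phi[\mathbf{u}]:\mathbf{u}\in\Lambda_1\}$ can be written as $$\mathbf{z}=\operatorname{sgn}(l)\,\chi_S+\frac{a}{n}\mathbf{j}$$ for some integers $l,a$ with $-\frac d2\le l<\frac d2$ and some $S\subseteq\{1,\dots,d\}$ with $|S|=|l|$ (i.e. up to a permutation of coordinates $\mathbf{z}=\operatorname{sgn}(l)[1^{|l|},0^{d-|l|}]+\frac an\mathbf{j}$). Moreover, each such minimal $\mathbf{z}$ has only one representation of this type.
   Context: $\mathbf{e}_1,\dots,\mathbf{e}_d$ is the standard basis of $\mathbb{R}^d$, $\mathbf{j}=(1,\dots,1)$, $\chi_S$ the indicator vector of $S$, and $\operatorname{sgn}(0)=0$. $L^1$ is the set of vectors in $\mathbb{Z}^d$ with $k$ coordinates $-1$ and $d-k$ coordinates $1$; $\Lambda$ is the $\mathbb{Z}$-span of $\mathbf{e}_1,\dots,\mathbf{e}_d,\frac{\mathbf{j}}{n}$; $\Lambda_1=\{\mathbf{z}\in\Lambda:\ \mathbf{z}\cdot\boldsymbol{\ell}\equiv1\pmod2\ \forall\boldsymbol{\ell}\in L^1\}$. $\phi_1[\mathbf{x}]=(\sum_ix_i)^2$, $\phi_2[\mathbf{x}]=\bigl|\mathbf{x}-\frac{\sum_ix_i}{d}\mathbf{j}\bigr|^2$.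 *)

theory Defs
  imports Complex_Main
begin

text \<open>Vectors of R^d are represented as functions nat => real supported on the
index set {1..d}.\<close>

definition jvec :: "nat \<Rightarrow> nat \<Rightarrow> real" where
  "jvec d = (\<lambda>i. if i \<in> {1..d} then 1 else 0)"

definition chi :: "nat \<Rightarrow> nat set \<Rightarrow> nat \<Rightarrow> real" where
  "chi d S = (\<lambda>i. if i \<in> {1..d} \<and> i \<in> S then 1 else 0)"

definition dotv :: "nat \<Rightarrow> (nat \<Rightarrow> real) \<Rightarrow> (nat \<Rightarrow> real) \<Rightarrow> real" where
  "dotv d x y = (\<Sum>i=1..d. x i * y i)"

definition L1 :: "nat \<Rightarrow> nat \<Rightarrow> (nat \<Rightarrow> real) set" where
  "L1 d k = {l. (\<forall>i. i \<notin> {1..d} \<longrightarrow> l i = 0) \<and>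
                (\<forall>i\<in>{1..d}. l i = 1 \<or> l i = -1) \<and>
                card {i\<in>{1..d}. l i = -1} = k}"

text \<open>Lambda: the Z-span of e_1,...,e_d and j/n.\<close>
definition Lam :: "nat \<Rightarrow> nat \<Rightarrow> (nat \<Rightarrow> real) set" where
  "Lam d n = {z. \<exists>c :: nat \<Rightarrow> int. \<exists>m :: int.
      z = (\<lambda>i. if i \<in> {1..d} then real_of_int (c i) + real_of_int m / real n else 0)}"

definition Lam1 :: "nat \<Rightarrow> nat \<Rightarrow> (nat \<Rightarrow> real) set" where
  "Lam1 d k = {z \<in> Lam d (d - 2*k). \<forall>l\<in>L1 d k. \<exists>m::int. dotv d z l = 2 * real_of_int m + 1}"

definition phi1 :: "nat \<Rightarrow> (nat \<Rightarrow> real) \<Rightarrow> real" where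
  "phi1 d x = (\<Sum>i=1..d. x i)^2"

definition phi2 :: "nat \<Rightarrow> (nat \<Rightarrow> real) \<Rightarrow> real" where
  "phi2 d x = (\<Sum>i=1..d. (x i - (\<Sum>j=1..d. x j) / real d)^2)"

end

theory Submission
  imports Defs
begin

text \<open>Moving one unit from coordinate p to coordinate q, i.e. passing from z to
z - e_p + e_q, keeps z in Lambda_1 (each l in L^1 changes z . l by -l_p + l_q, which is
even) and keeps the coordinate sum, hence phi_1, while it changes phi_2 by
2 - 2 (z_p - z_q). So the coordinates of a minimiser lie within 1 of each other; since
they differ by integers, z = chi_T + t j with t in (1/n)Z, and replacing T by its
complement when 2|T| >= d gives the required form. For uniqueness, a single coordinate
determines a/n modulo Z, so the coordinate sum l + d a/n determines l modulo d, and
-d/2 <= l < d/2 leaves room for only one such l.\<close>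

lemma sum_change_two_points:
  fixes f g :: "'a \<Rightarrow> 'b::ab_group_add"
  assumes "finite A" "p \<in> A" "q \<in> A" "p \<noteq> q" "\<And>i. i \<in> A - {p, q} \<Longrightarrow> f i = g i"
  shows "sum g A = sum f A + (g p - f p) + (g q - f q)"
proof -
  have split: "sum h A = h p + h q + sum h (A - {p, q})" for h :: "'a \<Rightarrow> 'b"
    using assms(1-4)
    by (simp add: sum.remove[of A p] sum.remove[of "A - {p}" q] Diff_insert2[symmetric] insert_commute)
  have "sum f (A - {p, q}) = sum g (A - {p, q})"
    using assms(5) by (intro sum.cong) auto
  then show ?thesis
    by (simp add: split[of f] split[of g] algebra_simps)
qed

definition move_unit :: "nat \<Rightarrow> nat \<Rightarrow> (nat \<Rightarrow> real) \<Rightarrow> nat \<Rightarrow> real" where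
  "move_unit p q x = x(p := x p - 1, q := x q + 1)"

context
  fixes p q d :: nat
  assumes pq: "p \<in> {1..d}" "q \<in> {1..d}" "p \<noteq> q"
begin

lemma sum_move_unit_change:
  fixes f :: "real \<Rightarrow> nat \<Rightarrow> real"
  shows "(\<Sum>i=1..d. f (move_unit p q x i) i) = (\<Sum>i=1..d. f (x i) i)
     + (f (x p - 1) p - f (x p) p) + (f (x q + 1) q - f (x q) q)"
  using pq sum_change_two_points[of "{1..d}" p q "\<lambda>i. f (x i) i" "\<lambda>i. f (move_unit p q x i) i"]
  by (simp add: move_unit_def)

lemma sum_move_unit: "(\<Sum>i=1..d. move_unit p q x i) = (\<Sum>i=1..d. x i)"
  using sum_move_unit_change[of "\<lambda>v i. v"] by simp

lemma dotv_move_unit: "dotv d (move_unit p q x) l = dotv d x l - l p + l q"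
  using sum_move_unit_change[of "\<lambda>v i. v * l i"] by (simp add: dotv_def algebra_simps)

lemma phi1_move_unit: "phi1 d (move_unit p q x) = phi1 d x"
  unfolding phi1_def sum_move_unit ..

lemma phi2_move_unit: "phi2 d (move_unit p q x) = phi2 d x + 2 - 2 * (x p - x q)"
  unfolding phi2_def sum_move_unit
    sum_move_unit_change[of "\<lambda>v i. (v - (\<Sum>j=1..d. x j) / real d)\<^sup>2"]
  by (simp add: power2_eq_square algebra_simps add_divide_distrib)

lemma move_unit_in_Lam: "z \<in> Lam d n \<Longrightarrow> move_unit p q z \<in> Lam d n"
proof -
  assume "z \<in> Lam d n"
  then obtain c :: "nat \<Rightarrow> int" and m :: int
    where z: "z = (\<lambda>i. if i \<in> {1..d} then real_of_int (c i) + real_of_int m / real n else 0)"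
    by (auto simp: Lam_def)
  have "move_unit p q z = (\<lambda>i. if i \<in> {1..d}
      then real_of_int ((c(p := c p - 1, q := c q + 1)) i) + real_of_int m / real n else 0)"
    using pq by (auto simp: move_unit_def z fun_eq_iff)
  then show ?thesis unfolding Lam_def by blast
qed

lemma move_unit_in_Lam1:
  assumes "z \<in> Lam1 d k"
  shows "move_unit p q z \<in> Lam1 d k"
  unfolding Lam1_def
proof (intro CollectI conjI ballI)
  show "move_unit p q z \<in> Lam d (d - 2 * k)"
    using assms by (simp add: Lam1_def move_unit_in_Lam)
next
  fix l assume l: "l \<in> L1 d k"
  then obtain m :: int where m: "dotv d z l = 2 * real_of_int m + 1"
    using assms by (auto simp: Lam1_def)
  have "l p = 1 \<or> l p = -1" "l q = 1 \<or> l q = -1"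
    using l pq by (auto simp: L1_def)
  then have "\<exists>e::int. - l p + l q = 2 * real_of_int e"
    by (elim disjE) (auto intro: exI[of _ "0::int"] exI[of _ "1::int"] exI[of _ "-1::int"])
  then obtain e :: int where "- l p + l q = 2 * real_of_int e" ..
  then show "\<exists>m::int. dotv d (move_unit p q z) l = 2 * real_of_int m + 1"
    by (intro exI[of _ "m + e"]) (simp add: dotv_move_unit m algebra_simps)
qed

end

lemma Lam1_minimizer_spread:
  fixes \<alpha> \<beta> :: real
  assumes "\<beta> > 0" and z: "z \<in> Lam1 d k"
    and min: "\<forall>u\<in>Lam1 d k. \<alpha> * phi1 d z + \<beta> * phi2 d z \<le> \<alpha> * phi1 d u + \<beta> * phi2 d u"
    and "p \<in> {1..d}" "q \<in> {1..d}"
  shows "z p - z q \<le> 1"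
proof (rule ccontr)
  assume "\<not> z p - z q \<le> 1"
  then have "p \<noteq> q" by auto
  with assms(4,5) \<open>\<not> z p - z q \<le> 1\<close> have "phi2 d (move_unit p q z) < phi2 d z"
    by (simp add: phi2_move_unit)
  with \<open>\<beta> > 0\<close> min move_unit_in_Lam1[OF assms(4,5) \<open>p \<noteq> q\<close> z] show False
    by (auto simp: phi1_move_unit[OF assms(4,5) \<open>p \<noteq> q\<close>] dest!: bspec[of _ _ "move_unit p q z"])
qed

lemma Lam_two_level:
  assumes z: "z \<in> Lam d n" and "n > 0" "d > 0"
    and spread: "\<And>p q. p \<in> {1..d} \<Longrightarrow> q \<in> {1..d} \<Longrightarrow> z p - z q \<le> 1"
  obtains T a where "T \<subseteq> {1..d}" "z = (\<lambda>i. chi d T i + real_of_int a / real n * jvec d i)"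
proof -
  obtain c :: "nat \<Rightarrow> int" and m :: int
    where zc: "z = (\<lambda>i. if i \<in> {1..d} then real_of_int (c i) + real_of_int m / real n else 0)"
    using z by (auto simp: Lam_def)
  define b where "b = Min (c ` {1..d})"
  define T where "T = {i \<in> {1..d}. c i \<noteq> b}"
  have "b \<in> c ` {1..d}"
    unfolding b_def using \<open>d > 0\<close> by (intro Min_in) auto
  then obtain i0 where "i0 \<in> {1..d}" "c i0 = b" by blast
  have level: "c i = (if i \<in> T then b + 1 else b)" if i: "i \<in> {1..d}" for i
  proof -
    have "b \<le> c i" using i by (simp add: b_def)
    moreover have "c i \<le> c i0 + 1"
      using spread[OF i \<open>i0 \<in> {1..d}\<close>] i \<open>i0 \<in> {1..d}\<close> by (simp add: zc)
    ultimately show ?thesis using i \<open>c i0 = b\<close> by (auto simp: T_def)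
  qed
  have "z i = chi d T i + real_of_int (b * int n + m) / real n * jvec d i" for i
    using level[of i] \<open>n > 0\<close> by (cases "i \<in> T") (auto simp: zc chi_def jvec_def field_simps)
  then have "z = (\<lambda>i. chi d T i + real_of_int (b * int n + m) / real n * jvec d i)" ..
  moreover have "T \<subseteq> {1..d}" by (auto simp: T_def)
  ultimately show thesis using that by blast
qed

definition canonical_vec :: "nat \<Rightarrow> nat \<Rightarrow> int \<Rightarrow> int \<Rightarrow> nat set \<Rightarrow> nat \<Rightarrow> real" where
  "canonical_vec d n l a S = (\<lambda>i. real_of_int (sgn l) * chi d S i + real_of_int a / real n * jvec d i)"

definition admissible :: "nat \<Rightarrow> int \<Rightarrow> nat set \<Rightarrow> bool" where
  "admissible d l S \<longleftrightarrow> - int d \<le> 2 * l \<and> 2 * l < int d \<and> S \<subseteq> {1..d} \<and> card S = nat \<bar>l\<bar>"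

lemma sum_chi: "S \<subseteq> {1..d} \<Longrightarrow> (\<Sum>i=1..d. chi d S i) = real (card S)"
  by (simp add: chi_def sum.If_cases Int_absorb1)

lemma sum_canonical_vec:
  assumes "S \<subseteq> {1..d}" "card S = nat \<bar>l\<bar>"
  shows "(\<Sum>i=1..d. canonical_vec d n l a S i) = real_of_int l + real d * (real_of_int a / real n)"
proof -
  have "real_of_int (sgn l) * real (card S) = real_of_int l"
    using assms(2) by (simp add: sgn_if)
  then show ?thesis
    unfolding canonical_vec_def sum.distrib sum_distrib_left[symmetric] sum_chi[OF assms(1)]
    by (simp add: jvec_def)
qed

lemma canonical_vec_card:
  assumes "T \<subseteq> {1..d}"
  shows "canonical_vec d n (int (card T)) a T = (\<lambda>i. chi d T i + real_of_int a / real n * jvec d i)"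
proof -
  have "chi d T = (\<lambda>i. 0)" if "card T = 0"
    using that assms finite_subset[OF assms] by (simp add: fun_eq_iff chi_def)
  then show ?thesis
    by (cases "card T = 0") (auto simp: canonical_vec_def)
qed

lemma canonical_vec_complement:
  assumes "T \<subseteq> {1..d}" "n > 0"
  shows "canonical_vec d n (int (card T) - int d) (a + int n) ({1..d} - T)
           = (\<lambda>i. chi d T i + real_of_int a / real n * jvec d i)"
proof -
  have "card T \<le> d" using card_mono[OF _ assms(1)] by simp
  have "T = {1..d}" if "card T = d"
    using that assms(1) by (simp add: card_subset_eq)
  then show ?thesis using \<open>card T \<le> d\<close> \<open>n > 0\<close>
    by (cases "card T = d") (auto simp: canonical_vec_def fun_eq_iff chi_def jvec_def field_simps)
qed

lemma canonical_form_exists: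
  assumes "T \<subseteq> {1..d}" "n > 0" "d > 0"
  obtains l b S where "admissible d l S"
    "canonical_vec d n l b S = (\<lambda>i. chi d T i + real_of_int a / real n * jvec d i)"
proof (cases "2 * card T < d")
  case True
  then show thesis
    using that[OF _ canonical_vec_card[OF assms(1)]] assms(1) by (simp add: admissible_def)
next
  case False
  have "card T \<le> d" using card_mono[OF _ assms(1)] by simp
  moreover have "card ({1..d} - T) = d - card T"
    using assms(1) by (simp add: card_Diff_subset finite_subset)
  ultimately have "admissible d (int (card T) - int d) ({1..d} - T)"
    using False \<open>d > 0\<close> by (auto simp: admissible_def)
  then show thesis
    using that canonical_vec_complement[OF assms(1,2)] by blast
qed

lemma canonical_vec_unique:
  assumes "n > 0" "d > 0" and adm: "admissible d l1 S1" "admissible d l2 S2"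
    and eq: "canonical_vec d n l1 a1 S1 = canonical_vec d n l2 a2 S2"
  shows "l1 = l2 \<and> a1 = a2 \<and> S1 = S2"
proof -
  \<comment> \<open>the first coordinates show that a1/n and a2/n differ by an integer\<close>
  define c :: int where "c = sgn l1 * of_bool (1 \<in> S1) - sgn l2 * of_bool (1 \<in> S2)"
  have "canonical_vec d n l1 a1 S1 1 = canonical_vec d n l2 a2 S2 1" using eq by simp
  then have c: "real_of_int a2 / real n - real_of_int a1 / real n = real_of_int c"
    using \<open>d > 0\<close> by (cases "1 \<in> S1"; cases "1 \<in> S2")
      (auto simp: canonical_vec_def chi_def jvec_def c_def algebra_simps)
  have "(\<Sum>i=1..d. canonical_vec d n l1 a1 S1 i) = (\<Sum>i=1..d. canonical_vec d n l2 a2 S2 i)"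
    using eq by simp
  then have "real_of_int l1 + real d * (real_of_int a1 / real n)
             = real_of_int l2 + real d * (real_of_int a2 / real n)"
    using adm sum_canonical_vec[of S1 d l1 n a1] sum_canonical_vec[of S2 d l2 n a2]
    by (simp add: admissible_def)
  then have "real_of_int (l1 - l2) = real d * real_of_int c"
    unfolding c[symmetric] by (simp add: algebra_simps)
  then have l: "l1 - l2 = int d * c"
    by (metis of_int_eq_iff of_int_mult of_int_of_nat_eq)
  have "c = 0"
  proof (rule ccontr)
    assume "c \<noteq> 0"
    then have "int d * 1 \<le> int d * \<bar>c\<bar>" by (intro mult_left_mono) auto
    then have "int d \<le> \<bar>int d * c\<bar>" by (simp add: abs_mult)
    with l adm show False unfolding admissible_def by linarith
  qed
  then have "l1 = l2" "a1 = a2"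
    using l c \<open>n > 0\<close> by (simp_all add: divide_simps)
  moreover have "S1 = S2"
  proof (cases "l1 = 0")
    case True
    then show ?thesis using adm \<open>l1 = l2\<close>
      by (auto simp: admissible_def finite_subset)
  next
    case False
    have "i \<in> S1 \<longleftrightarrow> i \<in> S2" if "i \<in> {1..d}" for i
      using fun_cong[OF eq, of i] that \<open>l1 = l2\<close> \<open>a1 = a2\<close> False
      by (auto simp: canonical_vec_def chi_def sgn_if split: if_splits)
    then show ?thesis using adm by (auto simp: admissible_def)
  qed
  ultimately show ?thesis by simp
qed

lemma canonical_form_ex1:
  assumes "z \<in> Lam d n" "n > 0" "d > 0"
    and "\<And>p q. p \<in> {1..d} \<Longrightarrow> q \<in> {1..d} \<Longrightarrow> z p - z q \<le> 1"
  shows "\<exists>!(l, a, S). admissible d l S \<and> z = canonical_vec d n l a S"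
proof -
  obtain T a where "T \<subseteq> {1..d}" "z = (\<lambda>i. chi d T i + real_of_int a / real n * jvec d i)"
    using Lam_two_level[OF assms] .
  then obtain l b S where lbS: "admissible d l S" "z = canonical_vec d n l b S"
    using canonical_form_exists[OF _ \<open>n > 0\<close> \<open>d > 0\<close>] by metis
  moreover have "(l', a', S') = (l, b, S)"
    if "admissible d l' S'" "z = canonical_vec d n l' a' S'" for l' a' S'
    using canonical_vec_unique[OF \<open>n > 0\<close> \<open>d > 0\<close> that(1) lbS(1), of a' b] that(2) lbS(2) by simp
  ultimately show ?thesis by (intro ex1I[of _ "(l, b, S)"]) auto
qed

theorem lemma2:
  fixes d k :: nat and \<alpha> \<beta> :: real and z :: "nat \<Rightarrow> real"
  assumes "k \<ge> 2" and "d > 2 * k"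
    and "\<alpha> > 0" and "\<beta> > 0"
    and "z \<in> Lam1 d k"
    and "\<forall>u\<in>Lam1 d k. \<alpha> * phi1 d z + \<beta> * phi2 d z \<le> \<alpha> * phi1 d u + \<beta> * phi2 d u"
  shows "\<exists>!(l, a, S). - int d \<le> 2 * (l::int) \<and> 2 * l < int d \<and>
           S \<subseteq> {1..d} \<and> card (S::nat set) = nat \<bar>l\<bar> \<and>
           z = (\<lambda>i. real_of_int (sgn l) * chi d S i
                     + real_of_int (a::int) / real (d - 2 * k) * jvec d i)"
proof -
  have "z \<in> Lam d (d - 2 * k)" using assms(5) by (simp add: Lam1_def)
  moreover have "d - 2 * k > 0" "d > 0" using assms(2) by auto
  moreover have "z p - z q \<le> 1" if "p \<in> {1..d}" "q \<in> {1..d}" for p q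
    using Lam1_minimizer_spread[OF assms(4-6) that] .
  ultimately have "\<exists>!(l, a, S). admissible d l S \<and> z = canonical_vec d (d - 2 * k) l a S"
    by (rule canonical_form_ex1)
  then show ?thesis by (simp add: admissible_def canonical_vec_def conj_assoc)
qed

end
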